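(* Fix bidder $i$ and $v_{-i}$, and assume $f_{i,k}>0$ for all $k$. Suppose $k\mapsto x_i(z_{i,k},v_{-i})$ is non-decreasing, the actual payments $p_i(z_{i,k},v_{-i})\ge0$ satisfy $p_i(z_{i,\ell},v_{-i})^2= z_{i,\ell}x_i(z_{i,\ell},v_{-i})-\sum_{j=1}^{\ell-1}(z_{i,j+1}-z_{i,j})x_i(z_{i,j},v_{-i})$ for all $\ell$, and $p_i(z_{i,k},v_{-i})>0$ for all $k$. Then $$\sum_{k=1}^{K_i} f_{i,k}\,p_i(z_{i,k},v_{-i})\ \ge\ \sum_{k=1}^{K_i} f_{i,k}\,\frac{\varphi_{i,k}\,x_i(z_{i,k},v_{-i})}{p_i(z_{i,k},v_{-i})}.$$
   Context: Bidder $i$'s type space is $V_i=\{z_{i,1}<\dots<z_{i,K_i}\}\subset[0,\infty)$, with the convention $z_{i,K_i+1}=z_{i,K_i}$; $f_{i,k}$ is the probability of $z_{i,k}$ and $F_{i,k}=\sum_{j\le k}f_{i,j}$. The (discrete) virtual value is $\varphi_{i,k}=z_{i,k}-(z_{i,k+1}-z_{i,k})\frac{1-F_{i,k}}{f_{i,k}}$. $x_i(\cdot,v_{-i}):V_i\to[0,1]$ is bidder $i$'s allocation given the others' types $v_{-i}$. *)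

theory Defs
  imports "HOL-Analysis.Analysis"
begin

(* Type space of bidder i: z 1 < ... < z K, indexed 1..K.
   Extended value with convention z_{K+1} = z_K. *)
definition zext :: "(nat \<Rightarrow> real) \<Rightarrow> nat \<Rightarrow> nat \<Rightarrow> real" where
  "zext z K k = (if k = K + 1 then z K else z k)"

definition cdf :: "(nat \<Rightarrow> real) \<Rightarrow> nat \<Rightarrow> real" where
  "cdf f k = (\<Sum>j=1..k. f j)"

definition virtual_value :: "(nat \<Rightarrow> real) \<Rightarrow> (nat \<Rightarrow> real) \<Rightarrow> nat \<Rightarrow> nat \<Rightarrow> real" where
  "virtual_value z f K k = z k - (zext z K (k + 1) - z k) * (1 - cdf f k) / f k"

end

theory Submission
  imports Defs
begin

text \<open>
  Put a_k = (z_(k+1) - z_k) x_k \<ge> 0, so that a_K = 0, p_l^2 = z_l x_l - \<Sum>_(k<l) a_k and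
  f_k \<phi>_k x_k = f_k z_k x_k - (\<Sum>_(l>k) f_l) a_k. The right-hand side thus divides each
  charge f_l a_k (k < l) by p_k. As p_(k+1)^2 - p_k^2 = z_(k+1) (x_(k+1) - x_k) \<ge> 0, the
  payments are nondecreasing, so dividing by p_l instead can only increase the sum; after
  exchanging the order of summation it becomes \<Sum>_l f_l p_l^2 / p_l = \<Sum>_l f_l p_l.
\<close>

lemma sum_upper_triangle_swap:
  fixes g :: "nat \<Rightarrow> nat \<Rightarrow> 'a::comm_monoid_add"
  shows "(\<Sum>k=m..n. \<Sum>l=Suc k..n. g k l) = (\<Sum>l=m..n. \<Sum>k=m..<l. g k l)"
proof -
  have "(\<Sum>k=m..n. \<Sum>l=Suc k..n. g k l) = (\<Sum>k\<in>{m..n}. \<Sum>l\<in>{l\<in>{m..n}. k < l}. g k l)"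
    by (intro sum.cong) (auto intro: sum.cong)
  also have "\<dots> = (\<Sum>l\<in>{m..n}. \<Sum>k\<in>{k\<in>{m..n}. k < l}. g k l)"
    by (rule sum.swap_restrict) auto
  also have "\<dots> = (\<Sum>l=m..n. \<Sum>k=m..<l. g k l)"
    by (intro sum.cong) (auto intro: sum.cong)
  finally show ?thesis .
qed

lemma sum_charges_shifted_div_le:
  fixes f a c p :: "nat \<Rightarrow> real"
  assumes p_pos: "\<And>k. m \<le> k \<Longrightarrow> k \<le> n \<Longrightarrow> p k > 0"
    and p_mono: "\<And>k l. m \<le> k \<Longrightarrow> k \<le> l \<Longrightarrow> l \<le> n \<Longrightarrow> p k \<le> p l"
    and f_nonneg: "\<And>k. m \<le> k \<Longrightarrow> k \<le> n \<Longrightarrow> f k \<ge> 0"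
    and a_nonneg: "\<And>k. m \<le> k \<Longrightarrow> k \<le> n \<Longrightarrow> a k \<ge> 0"
  shows "(\<Sum>k=m..n. (f k * c k - (\<Sum>l=Suc k..n. f l) * a k) / p k)
      \<le> (\<Sum>l=m..n. f l * (c l - (\<Sum>k=m..<l. a k)) / p l)"
proof -
  have "(\<Sum>k=m..n. \<Sum>l=Suc k..n. f l * a k / p l) \<le> (\<Sum>k=m..n. \<Sum>l=Suc k..n. f l * a k / p k)"
    using p_pos p_mono f_nonneg a_nonneg
    by (intro sum_mono divide_left_mono) auto
  then show ?thesis
    unfolding sum_upper_triangle_swap[of "\<lambda>k l. f l * a k / p l"]
    by (simp add: diff_divide_distrib right_diff_distrib sum_subtractf sum_distrib_left
        sum_distrib_right sum_divide_distrib mult.commute)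
qed

lemma one_minus_cdf_eq_tail_sum:
  assumes "(\<Sum>k=1..K. f k) = 1" and "k \<le> K"
  shows "1 - cdf f k = (\<Sum>l=Suc k..K. f l)"
  using sum.ub_add_nat[of 1 k f "K - k"] assms by (simp add: cdf_def)

lemma density_times_virtual_value:
  assumes "f k \<noteq> 0" and "(\<Sum>k=1..K. f k) = 1" and "k \<le> K"
  shows "f k * virtual_value z f K k
      = f k * z k - (\<Sum>l=Suc k..K. f l) * (zext z K (Suc k) - z k)"
  using assms by (simp add: virtual_value_def one_minus_cdf_eq_tail_sum field_simps)

definition myerson_payment :: "(nat \<Rightarrow> real) \<Rightarrow> (nat \<Rightarrow> real) \<Rightarrow> nat \<Rightarrow> real" where
  "myerson_payment z x l = z l * x l - (\<Sum>j=1..l-1. (z (j + 1) - z j) * x j)"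

lemma myerson_payment_Suc:
  assumes "1 \<le> k"
  shows "myerson_payment z x (Suc k) = myerson_payment z x k + z (Suc k) * (x (Suc k) - x k)"
proof -
  obtain i where "k = Suc i" using assms by (cases k) auto
  then show ?thesis by (simp add: myerson_payment_def algebra_simps)
qed

lemma nondecreasing_sqrt_myerson_payment:
  fixes p :: "nat \<Rightarrow> real"
  assumes z_nonneg: "\<And>k. 1 \<le> k \<Longrightarrow> k \<le> K \<Longrightarrow> z k \<ge> 0"
    and x_mono: "\<And>k. 1 \<le> k \<Longrightarrow> k < K \<Longrightarrow> x k \<le> x (Suc k)"
    and p_nonneg: "\<And>k. 1 \<le> k \<Longrightarrow> k \<le> K \<Longrightarrow> p k \<ge> 0"
    and p_sq: "\<And>k. 1 \<le> k \<Longrightarrow> k \<le> K \<Longrightarrow> (p k)\<^sup>2 = myerson_payment z x k"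
    and "1 \<le> k" "k \<le> l" "l \<le> K"
  shows "p k \<le> p l"
proof (rule power2_le_imp_le)
  have "(p i)\<^sup>2 \<le> (p (Suc i))\<^sup>2" if "i \<in> {k..<l}" for i
    using that assms(5-7) z_nonneg[of "Suc i"] x_mono[of i]
    by (simp add: p_sq myerson_payment_Suc)
  then show "(p k)\<^sup>2 \<le> (p l)\<^sup>2"
    using lift_Suc_mono_le_ivl[of "{k..<l}" "\<lambda>i. (p i)\<^sup>2"] \<open>k \<le> l\<close> by blast
  show "0 \<le> p l" using p_nonneg assms(5-7) by simp
qed

theorem mainTheorem3:
  fixes K :: nat and z f x p :: "nat \<Rightarrow> real"
  assumes K_pos: "K \<ge> 1"
    and z_nonneg: "z 1 \<ge> 0"
    and z_strict: "\<And>k. 1 \<le> k \<Longrightarrow> k < K \<Longrightarrow> z k < z (k + 1)"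
    and f_pos: "\<And>k. 1 \<le> k \<Longrightarrow> k \<le> K \<Longrightarrow> f k > 0"
    and f_sum: "(\<Sum>k=1..K. f k) = 1"
    and x_range: "\<And>k. 1 \<le> k \<Longrightarrow> k \<le> K \<Longrightarrow> 0 \<le> x k \<and> x k \<le> 1"
    and x_mono: "\<And>k l. 1 \<le> k \<Longrightarrow> k \<le> l \<Longrightarrow> l \<le> K \<Longrightarrow> x k \<le> x l"
    and p_nonneg: "\<And>k. 1 \<le> k \<Longrightarrow> k \<le> K \<Longrightarrow> p k \<ge> 0"
    and p_sq: "\<And>l. 1 \<le> l \<Longrightarrow> l \<le> K \<Longrightarrow>
        (p l)\<^sup>2 = z l * x l - (\<Sum>j=1..l-1. (z (j + 1) - z j) * x j)"
    and p_pos: "\<And>k. 1 \<le> k \<Longrightarrow> k \<le> K \<Longrightarrow> p k > 0"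
  shows "(\<Sum>k=1..K. f k * p k) \<ge>
         (\<Sum>k=1..K. f k * (virtual_value z f K k * x k / p k))"
proof -
  define a where "a k = (zext z K (Suc k) - z k) * x k" for k
  have z_ge_z1: "z 1 \<le> z k" if "1 \<le> k" "k \<le> K" for k
    using lift_Suc_mono_le_ivl[of "{1..<k}" z 1 k] z_strict that by fastforce
  have p_mono: "p k \<le> p l" if "1 \<le> k" "k \<le> l" "l \<le> K" for k l
  proof (rule nondecreasing_sqrt_myerson_payment[where z = z and x = x and K = K])
    show "\<And>k. 1 \<le> k \<Longrightarrow> k \<le> K \<Longrightarrow> 0 \<le> z k"
      using z_ge_z1 z_nonneg by (meson order_trans)
    show "\<And>k. 1 \<le> k \<Longrightarrow> k < K \<Longrightarrow> x k \<le> x (Suc k)"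
      using x_mono by simp
    show "\<And>k. 1 \<le> k \<Longrightarrow> k \<le> K \<Longrightarrow> (p k)\<^sup>2 = myerson_payment z x k"
      using p_sq by (simp add: myerson_payment_def)
  qed (use that p_nonneg in auto)
  have a_nonneg: "a k \<ge> 0" if "1 \<le> k" "k \<le> K" for k
    using that z_strict[of k] x_range[of k] by (cases "k = K") (auto simp: a_def zext_def)
  have "(\<Sum>k=1..K. f k * (virtual_value z f K k * x k / p k))
      = (\<Sum>k=1..K. (f k * (z k * x k) - (\<Sum>l=Suc k..K. f l) * a k) / p k)"
  proof (intro sum.cong)
    fix k assume "k \<in> {1..K}"
    then have "f k * virtual_value z f K k
        = f k * z k - (\<Sum>l=Suc k..K. f l) * (zext z K (Suc k) - z k)"
      using f_pos[of k] f_sum by (intro density_times_virtual_value) auto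
    then have "f k * virtual_value z f K k * x k
        = f k * (z k * x k) - (\<Sum>l=Suc k..K. f l) * a k"
      unfolding a_def by (simp add: left_diff_distrib mult.assoc)
    then show "f k * (virtual_value z f K k * x k / p k)
        = (f k * (z k * x k) - (\<Sum>l=Suc k..K. f l) * a k) / p k"
      by (simp add: mult.assoc)
  qed simp
  also have "\<dots> \<le> (\<Sum>l=1..K. f l * (z l * x l - (\<Sum>k=1..<l. a k)) / p l)"
    using p_pos p_mono f_pos a_nonneg
    by (intro sum_charges_shifted_div_le) (auto intro: less_imp_le)
  also have "\<dots> = (\<Sum>l=1..K. f l * p l)"
  proof (intro sum.cong)
    fix l assume l: "l \<in> {1..K}"
    then have "(\<Sum>k=1..<l. a k) = (\<Sum>j=1..l-1. (z (j + 1) - z j) * x j)"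
      by (intro sum.cong) (auto simp: a_def zext_def)
    then have "z l * x l - (\<Sum>k=1..<l. a k) = (p l)\<^sup>2"
      using l p_sq[of l] by simp
    then show "f l * (z l * x l - (\<Sum>k=1..<l. a k)) / p l = f l * p l"
      using l p_pos[of l] by (simp add: power2_eq_square)
  qed simp
  finally show ?thesis .
qed

end
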